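(* Let $(X_n)_{n\ge 0}$ be a discrete-time Markov chain with state space $\mathbb{R}^d$ whose transition probabilities have densities with respect to Lebesgue measure: $p_n(x,y)=p_{n,n+1}(x,y)$ denotes the one-step transition density from time $n$ to time $n+1$, and $p_{n,m}(x,y)$, $m\ge n$, denotes the $(m-n)$-step transition density (with $p_{n,n}(x,\cdot)$ interpreted as the Dirac distribution $\delta_x$). Fix $N\in\mathbb{N}$ and, for $0\le m<N$, functions $\psi_m:\mathbb{R}^d\times\mathbb{R}^d\to\mathbb{R}_+$ such that for each $m$ and each $y$ the function $$q_m(y,\cdot):=\frac{p_{N-m-1}(\cdot,y)}{\psi_m(y,\cdot)}$$ is a probability density on $\mathbb{R}^d$. For $y\in\mathbb{R}^d$ let $(Y^y_m,\mathcal{Y}^y_m)_{0\le m\le N}$ be the process defined by $Y^y_0=y$, $\mathcal{Y}^y_0=1$, $$\mathbb{P}(Y^y_{m+1}\in dz'\mid Y^y_m=z)=q_m(z,z')\,dz',\qquad \mathcal{Y}^y_{m+1}=\mathcal{Y}^y_m\,\psi_m(Y^y_m,Y^y_{m+1}),\quad 0\le m<N.$$ Then for every $n$ with $0\le n\le N$ and every test function $g:\mathbb{R}^d\to\mathbb{R}$ (for which the expressions are well defined), $$\int g(x)\,p_{n,N}(x,y)\,dx=\mathbb{E}\left[g(Y^y_{N-n})\,\mathcal{Y}^y_{N-n}\right].$$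
   Context: For $n=N$ the left-hand side is understood with $p_{N,N}(x,y)$ the Dirac distribution at $y$, i.e. it equals $g(y)$. *)

theory Defs
  imports "HOL-Probability.Probability"
begin

text \<open>Multi-step transition densities (Chapman--Kolmogorov), valued in ennreal.
  tdens p n k x y is the k-step density p_{n,n+k}(x,y) for k \<ge> 1;
  p n x y is the one-step density p_{n,n+1}(x,y).  The case k = 0 (Dirac)
  is handled separately in pback.\<close>
fun tdens :: "(nat \<Rightarrow> 'a::euclidean_space \<Rightarrow> 'a \<Rightarrow> real) \<Rightarrow> nat \<Rightarrow> nat \<Rightarrow> 'a \<Rightarrow> 'a \<Rightarrow> ennreal" where
  "tdens p n 0 x y = 0"
| "tdens p n (Suc 0) x y = ennreal (p n x y)"
| "tdens p n (Suc (Suc k)) x y =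
     (\<integral>\<^sup>+ z. tdens p n (Suc k) x z * ennreal (p (n + Suc k) z y) \<partial>lborel)"

text \<open>The (sigma-finite) measure p_{n,N}(x,y) dx in the variable x, for fixed y;
  for n = N it is the Dirac measure at y.\<close>
definition pback :: "(nat \<Rightarrow> 'a::euclidean_space \<Rightarrow> 'a \<Rightarrow> real) \<Rightarrow> nat \<Rightarrow> nat \<Rightarrow> 'a \<Rightarrow> 'a measure" where
  "pback p n N y = (if N \<le> n then return borel y else density lborel (\<lambda>x. tdens p n (N - n) x y))"

definition qdens :: "(nat \<Rightarrow> 'a::euclidean_space \<Rightarrow> 'a \<Rightarrow> real) \<Rightarrow> (nat \<Rightarrow> 'a \<Rightarrow> 'a \<Rightarrow> real) \<Rightarrow> nat \<Rightarrow> nat \<Rightarrow> 'a \<Rightarrow> 'a \<Rightarrow> real" where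
  "qdens p psi N m y z = p (N - m - 1) z y / psi m y z"

fun Ylaw :: "(nat \<Rightarrow> 'a::euclidean_space \<Rightarrow> 'a \<Rightarrow> real) \<Rightarrow> (nat \<Rightarrow> 'a \<Rightarrow> 'a \<Rightarrow> real) \<Rightarrow> nat \<Rightarrow> 'a \<Rightarrow> nat \<Rightarrow> ('a \<times> real) measure" where
  "Ylaw p psi N y 0 = return borel (y, 1)"
| "Ylaw p psi N y (Suc m) = Ylaw p psi N y m \<bind>
     (\<lambda>(z, w). distr (density lborel (\<lambda>z'. ennreal (qdens p psi N m z z'))) borel
                       (\<lambda>z'. (z', w * psi m z z')))"

end

theory Submission
  imports Defs
begin

text \<open>Let A_m h(z) = \<integral> p_m(x, z) h(x) dx be the adjoint of the one-step transition operator.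
  Splitting off the first step in Chapman--Kolmogorov gives
  \<integral> h(x) p_{n,N}(x, y) dx = \<integral> A_n h(x) p_{n+1,N}(x, y) dx. Dually, because q_m \<psi>_m = p_{N-m-1},
  one step of the weighted chain from state z with weight w turns h(Y) times the weight into
  w A_{N-m-1} h(z) on average. Induction on k = N - n therefore shows that the law of Y_k
  reweighted by its weight is the measure p_{N-k,N}(x, y) dx, and the theorem is the change of
  variables for this equality of measures.\<close>

lemma (in sigma_finite_measure) measurable_density_subprob_algebra:
  assumes f: "case_prod f \<in> borel_measurable (L \<Otimes>\<^sub>M M)"
    and sub: "\<And>x. x \<in> space L \<Longrightarrow> subprob_space (density M (f x))"
  shows "(\<lambda>x. density M (f x)) \<in> L \<rightarrow>\<^sub>M subprob_algebra M"
proof (rule measurable_subprob_algebra)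
  fix A assume A: "A \<in> sets M"
  have "(\<lambda>x. \<integral>\<^sup>+ z. f x z * indicator A z \<partial>M) \<in> borel_measurable L"
    using f A by measurable
  moreover have "emeasure (density M (f x)) A = (\<integral>\<^sup>+ z. f x z * indicator A z \<partial>M)"
    if "x \<in> space L" for x
    using measurable_Pair2[OF f that] A by (simp add: emeasure_density)
  ultimately show "(\<lambda>x. emeasure (density M (f x)) A) \<in> borel_measurable L"
    by (simp cong: measurable_cong)
qed (simp_all add: sub)

lemma borel_measurable_fst[measurable]:
  "fst \<in> borel_measurable (borel :: ('a::second_countable_topology \<times> 'b::second_countable_topology) measure)"
  by (metis borel_prod measurable_fst)

lemma borel_measurable_snd[measurable]:
  "snd \<in> borel_measurable (borel :: ('a::second_countable_topology \<times> 'b::second_countable_topology) measure)"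
  by (metis borel_prod measurable_snd)

locale transition_densities =
  fixes p :: "nat \<Rightarrow> 'a::euclidean_space \<Rightarrow> 'a \<Rightarrow> real"
  assumes p_measurable: "\<And>k. (\<lambda>(x, z). p k x z) \<in> borel_measurable borel"
begin

lemma p_measurable_pair[measurable]: "(\<lambda>(x, z). p k x z) \<in> borel_measurable (borel \<Otimes>\<^sub>M borel)"
  using p_measurable by (simp add: borel_prod)

lemma tdens_measurable[measurable]: "(\<lambda>(x, y). tdens p n k x y) \<in> borel_measurable (borel \<Otimes>\<^sub>M borel)"
proof (cases k)
  case (Suc k)
  show ?thesis unfolding Suc by (induction k) simp_all
qed simp

lemma tdens_split_first_step:
  "tdens p n (Suc (Suc k)) x y = (\<integral>\<^sup>+ z. ennreal (p n x z) * tdens p (Suc n) (Suc k) z y \<partial>lborel)"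
proof (induction k arbitrary: y)
  case (Suc k)
  have "tdens p n (Suc (Suc (Suc k))) x y
      = (\<integral>\<^sup>+ z. tdens p n (Suc (Suc k)) x z * ennreal (p (n + Suc (Suc k)) z y) \<partial>lborel)"
    by simp
  also have "\<dots> = (\<integral>\<^sup>+ z. (\<integral>\<^sup>+ u. ennreal (p n x u) * tdens p (Suc n) (Suc k) u z * ennreal (p (n + Suc (Suc k)) z y) \<partial>lborel) \<partial>lborel)"
    unfolding Suc.IH by (simp add: nn_integral_multc del: tdens.simps)
  also have "\<dots> = (\<integral>\<^sup>+ u. (\<integral>\<^sup>+ z. ennreal (p n x u) * tdens p (Suc n) (Suc k) u z * ennreal (p (n + Suc (Suc k)) z y) \<partial>lborel) \<partial>lborel)"
    by (rule lborel_pair.Fubini') measurable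
  also have "\<dots> = (\<integral>\<^sup>+ u. ennreal (p n x u) * tdens p (Suc n) (Suc (Suc k)) u y \<partial>lborel)"
    by (simp add: nn_integral_cmult mult.assoc)
  finally show ?case .
qed simp

definition adjoint_step :: "nat \<Rightarrow> ('a \<Rightarrow> ennreal) \<Rightarrow> 'a \<Rightarrow> ennreal" where
  "adjoint_step m h z = (\<integral>\<^sup>+ x. ennreal (p m x z) * h x \<partial>lborel)"

lemma adjoint_step_measurable[measurable]:
  assumes [measurable]: "h \<in> borel_measurable borel"
  shows "adjoint_step m h \<in> borel_measurable borel"
  unfolding adjoint_step_def by measurable

lemma nn_integral_pback_Suc:
  assumes "n < N" and h[measurable]: "h \<in> borel_measurable borel"
  shows "(\<integral>\<^sup>+ x. h x \<partial>pback p n N y) = (\<integral>\<^sup>+ x. adjoint_step n h x \<partial>pback p (Suc n) N y)"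
proof (cases "N = Suc n")
  case True
  then have "pback p n N y = density lborel (\<lambda>x. ennreal (p n x y))"
    and "pback p (Suc n) N y = return borel y"
    by (simp_all add: pback_def)
  then show ?thesis
    by (simp add: nn_integral_density nn_integral_return adjoint_step_def)
next
  case False
  define k where "k = N - n - 2"
  have k: "N - n = Suc (Suc k)" "N - Suc n = Suc k"
    using \<open>n < N\<close> False by (simp_all add: k_def)
  have pback_n: "pback p n N y = density lborel (\<lambda>x. tdens p n (Suc (Suc k)) x y)"
    and pback_Suc_n: "pback p (Suc n) N y = density lborel (\<lambda>x. tdens p (Suc n) (Suc k) x y)"
    using \<open>n < N\<close> False k unfolding pback_def by (simp_all del: tdens.simps)
  have "(\<integral>\<^sup>+ x. h x \<partial>pback p n N y) = (\<integral>\<^sup>+ x. tdens p n (Suc (Suc k)) x y * h x \<partial>lborel)"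
    by (simp add: pback_n nn_integral_density del: tdens.simps)
  also have "\<dots> = (\<integral>\<^sup>+ x. (\<integral>\<^sup>+ z. ennreal (p n x z) * tdens p (Suc n) (Suc k) z y * h x \<partial>lborel) \<partial>lborel)"
    by (simp add: tdens_split_first_step nn_integral_multc del: tdens.simps)
  also have "\<dots> = (\<integral>\<^sup>+ z. (\<integral>\<^sup>+ x. ennreal (p n x z) * tdens p (Suc n) (Suc k) z y * h x \<partial>lborel) \<partial>lborel)"
    by (rule lborel_pair.Fubini') measurable
  also have "\<dots> = (\<integral>\<^sup>+ z. tdens p (Suc n) (Suc k) z y * adjoint_step n h z \<partial>lborel)"
    by (simp add: adjoint_step_def nn_integral_cmult[symmetric] ac_simps del: tdens.simps)
  also have "\<dots> = (\<integral>\<^sup>+ x. adjoint_step n h x \<partial>pback p (Suc n) N y)"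
    by (simp add: pback_Suc_n nn_integral_density del: tdens.simps)
  finally show ?thesis .
qed

end

locale backward_weighted_chain = transition_densities p
  for p :: "nat \<Rightarrow> 'a::euclidean_space \<Rightarrow> 'a \<Rightarrow> real" +
  fixes psi :: "nat \<Rightarrow> 'a \<Rightarrow> 'a \<Rightarrow> real" and N :: nat
  assumes p_nonneg: "\<And>k x z. p k x z \<ge> 0"
    and psi_measurable: "\<And>m. m < N \<Longrightarrow> (\<lambda>(u, z). psi m u z) \<in> borel_measurable borel"
    and psi_pos: "\<And>m u z. m < N \<Longrightarrow> psi m u z > 0"
    and q_prob: "\<And>m u. m < N \<Longrightarrow> prob_space (density lborel (\<lambda>z. ennreal (qdens p psi N m u z)))"
begin

definition step_kernel :: "nat \<Rightarrow> 'a \<times> real \<Rightarrow> ('a \<times> real) measure" where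
  "step_kernel m = (\<lambda>(z, w). distr (density lborel (\<lambda>z'. ennreal (qdens p psi N m z z'))) borel
                                    (\<lambda>z'. (z', w * psi m z z')))"

lemma Ylaw_Suc: "Ylaw p psi N y (Suc m) = Ylaw p psi N y m \<bind> step_kernel m"
  by (simp add: step_kernel_def)

lemma sets_step_kernel[simp]: "sets (step_kernel m zw) = sets borel"
  by (simp add: step_kernel_def split_beta)

lemma sets_Ylaw[measurable_cong]: "sets (Ylaw p psi N y k) = sets borel"
proof (induction k)
  case (Suc k)
  have "space (Ylaw p psi N y k) \<noteq> {}"
    using sets_eq_imp_space_eq[OF Suc.IH] by simp
  then show ?case
    unfolding Ylaw_Suc by (rule sets_bind[OF sets_step_kernel])
qed simp

lemma space_Ylaw[simp]: "space (Ylaw p psi N y k) = UNIV"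
  using sets_eq_imp_space_eq[OF sets_Ylaw] by simp

lemma psi_measurable_pair:
  "m < N \<Longrightarrow> (\<lambda>(u, z). psi m u z) \<in> borel_measurable (borel \<Otimes>\<^sub>M borel)"
  using psi_measurable by (simp add: borel_prod)

lemma step_kernel_measurable:
  assumes "m < N"
  shows "step_kernel m \<in> borel \<rightarrow>\<^sub>M subprob_algebra borel"
proof -
  note psi_measurable_pair[OF assms, measurable]
  have "(\<lambda>zw. density lborel (\<lambda>z'. ennreal (qdens p psi N m (fst zw) z')))
      \<in> borel \<Otimes>\<^sub>M borel \<rightarrow>\<^sub>M subprob_algebra lborel"
  proof (rule lborel.measurable_density_subprob_algebra)
    show "(\<lambda>(zw, z'). ennreal (qdens p psi N m (fst zw) z')) \<in> borel_measurable ((borel \<Otimes>\<^sub>M borel) \<Otimes>\<^sub>M lborel)"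
      unfolding qdens_def by measurable
    show "subprob_space (density lborel (\<lambda>z'. ennreal (qdens p psi N m (fst zw) z')))" for zw
      using q_prob[OF assms] by (rule prob_space_imp_subprob_space)
  qed
  then have "(\<lambda>zw. distr (density lborel (\<lambda>z'. ennreal (qdens p psi N m (fst zw) z'))) borel
                      (\<lambda>z'. (z', snd zw * psi m (fst zw) z'))) \<in> borel \<Otimes>\<^sub>M borel \<rightarrow>\<^sub>M subprob_algebra borel"
    by (rule measurable_distr2[rotated]) (simp add: borel_prod[symmetric])
  then show ?thesis
    by (simp add: step_kernel_def split_beta' borel_prod)
qed

lemma step_kernel_measurable_Ylaw:
  "m < N \<Longrightarrow> step_kernel m \<in> Ylaw p psi N y k \<rightarrow>\<^sub>M subprob_algebra borel"
  by (subst measurable_cong_sets[OF sets_Ylaw refl]) (rule step_kernel_measurable)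

lemma qdens_mult_psi: "m < N \<Longrightarrow> qdens p psi N m z z' * psi m z z' = p (N - Suc m) z' z"
  using psi_pos[of m z z'] by (simp add: qdens_def)

text \<open>No sign condition on \<open>w\<close> is needed: for \<open>w < 0\<close> both sides vanish, because
  \<open>\<psi>\<^sub>m > 0\<close> and \<^const>\<open>ennreal\<close> truncates negative reals to \<open>0\<close>.\<close>
lemma nn_integral_step_kernel:
  assumes m: "m < N" and h[measurable]: "h \<in> borel_measurable borel"
  shows "(\<integral>\<^sup>+ u. h (fst u) * ennreal (snd u) \<partial>step_kernel m (z, w)) = adjoint_step (N - Suc m) h z * ennreal w"
proof -
  note psi_measurable_pair[OF m, measurable]
  have "(\<integral>\<^sup>+ u. h (fst u) * ennreal (snd u) \<partial>step_kernel m (z, w))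
      = (\<integral>\<^sup>+ z'. ennreal (qdens p psi N m z z') * (h z' * ennreal (w * psi m z z')) \<partial>lborel)"
    unfolding step_kernel_def qdens_def by (simp add: nn_integral_distr nn_integral_density)
  also have "\<dots> = (\<integral>\<^sup>+ z'. ennreal (p (N - Suc m) z' z) * h z' * ennreal w \<partial>lborel)"
  proof (rule nn_integral_cong)
    fix z'
    have "ennreal (qdens p psi N m z z') * ennreal (psi m z z') = ennreal (p (N - Suc m) z' z)"
      using p_nonneg psi_pos[OF m] qdens_mult_psi[OF m]
      by (simp add: ennreal_mult[symmetric] qdens_def less_imp_le)
    then show "ennreal (qdens p psi N m z z') * (h z' * ennreal (w * psi m z z'))
        = ennreal (p (N - Suc m) z' z) * h z' * ennreal w"
      using psi_pos[OF m] by (simp add: ennreal_mult'' less_imp_le ac_simps)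
  qed
  also have "\<dots> = adjoint_step (N - Suc m) h z * ennreal w"
    unfolding adjoint_step_def by (rule nn_integral_multc) measurable
  finally show ?thesis .
qed

lemma AE_Ylaw_weight_nonneg: "k \<le> N \<Longrightarrow> AE zw in Ylaw p psi N y k. 0 \<le> snd zw"
proof (induction k)
  case 0
  have "Measurable.pred borel (\<lambda>zw::'a \<times> real. 0 \<le> snd zw)"
    by measurable
  then show ?case
    unfolding Ylaw.simps(1) by (subst AE_return) (simp_all add: pred_def)
next
  case (Suc k)
  then have k: "k < N" by simp
  note psi_measurable_pair[OF k, measurable]
  have "AE u in step_kernel k (z, w). 0 \<le> snd u" if "0 \<le> w" for z w
    unfolding step_kernel_def prod.case
    by (subst AE_distr_iff) (simp_all add: that psi_pos[OF k] less_imp_le)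
  then have "AE zw in Ylaw p psi N y k. AE u in step_kernel k zw. 0 \<le> snd u"
    using Suc.IH k by (auto elim!: eventually_mono)
  then show ?case
    unfolding Ylaw_Suc by (subst AE_bind[OF step_kernel_measurable_Ylaw[OF k]]) simp_all
qed

lemma nn_integral_Ylaw_weighted:
  assumes "k \<le> N" and "h \<in> borel_measurable borel"
  shows "(\<integral>\<^sup>+ zw. h (fst zw) * ennreal (snd zw) \<partial>Ylaw p psi N y k) = (\<integral>\<^sup>+ x. h x \<partial>pback p (N - k) N y)"
  using assms
proof (induction k arbitrary: h)
  case 0
  then show ?case by (simp add: pback_def nn_integral_return)
next
  case (Suc k)
  then have k: "k < N" and h[measurable]: "h \<in> borel_measurable borel" by simp_all
  have "(\<integral>\<^sup>+ zw. h (fst zw) * ennreal (snd zw) \<partial>Ylaw p psi N y (Suc k))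
      = (\<integral>\<^sup>+ zw. (\<integral>\<^sup>+ u. h (fst u) * ennreal (snd u) \<partial>step_kernel k zw) \<partial>Ylaw p psi N y k)"
    unfolding Ylaw_Suc by (rule nn_integral_bind[OF _ step_kernel_measurable_Ylaw[OF k]]) simp
  also have "\<dots> = (\<integral>\<^sup>+ zw. adjoint_step (N - Suc k) h (fst zw) * ennreal (snd zw) \<partial>Ylaw p psi N y k)"
    by (intro nn_integral_cong) (metis nn_integral_step_kernel[OF k h] prod.collapse)
  also have "\<dots> = (\<integral>\<^sup>+ x. adjoint_step (N - Suc k) h x \<partial>pback p (N - k) N y)"
    using k by (simp add: Suc.IH)
  also have "\<dots> = (\<integral>\<^sup>+ x. h x \<partial>pback p (N - Suc k) N y)"
    using k by (simp add: nn_integral_pback_Suc Suc_diff_Suc)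
  finally show ?case .
qed

lemma distr_weighted_Ylaw:
  assumes "k \<le> N"
  shows "distr (density (Ylaw p psi N y k) (\<lambda>zw. ennreal (snd zw))) borel fst = pback p (N - k) N y"
    (is "distr ?M borel fst = _")
proof (rule measure_eqI)
  show "sets (distr ?M borel fst) = sets (pback p (N - k) N y)"
    by (simp add: pback_def)
  fix A assume "A \<in> sets (distr ?M borel fst)"
  then have A: "A \<in> sets borel" by simp
  have fst_measurable: "fst \<in> ?M \<rightarrow>\<^sub>M borel"
    by (subst measurable_cong_sets[where M'=borel and N'=borel]) (simp_all add: sets_Ylaw)
  have "emeasure (distr ?M borel fst) A = emeasure ?M (fst -` A)"
    using emeasure_distr[OF fst_measurable A] by simp
  also have "\<dots> = (\<integral>\<^sup>+ zw. indicator A (fst zw) * ennreal (snd zw) \<partial>Ylaw p psi N y k)"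
    using measurable_sets[OF fst_measurable A]
    by (simp add: emeasure_density sets_Ylaw ac_simps indicator_vimage[symmetric])
  also have "\<dots> = emeasure (pback p (N - k) N y) A"
    using assms A by (simp add: nn_integral_Ylaw_weighted pback_def)
  finally show "emeasure (distr ?M borel fst) A = emeasure (pback p (N - k) N y) A" .
qed

end

theorem theorem2:
  fixes p :: "nat \<Rightarrow> 'a::euclidean_space \<Rightarrow> 'a \<Rightarrow> real"
    and psi :: "nat \<Rightarrow> 'a \<Rightarrow> 'a \<Rightarrow> real"
    and N n :: nat and y :: 'a and g :: "'a \<Rightarrow> real"
  assumes p_meas: "\<And>k. (\<lambda>(x, z). p k x z) \<in> borel_measurable borel"
    and p_nonneg: "\<And>k x z. p k x z \<ge> 0"
    and p_prob: "\<And>k x. prob_space (density lborel (\<lambda>z. ennreal (p k x z)))"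
    and psi_meas: "\<And>m. m < N \<Longrightarrow> (\<lambda>(u, z). psi m u z) \<in> borel_measurable borel"
    and psi_pos: "\<And>m u z. m < N \<Longrightarrow> psi m u z > 0"
    and q_prob: "\<And>m u. m < N \<Longrightarrow> prob_space (density lborel (\<lambda>z. ennreal (qdens p psi N m u z)))"
    and nN: "n \<le> N"
    and g_meas: "g \<in> borel_measurable borel"
    and g_int: "integrable (pback p n N y) g"
  shows "(\<integral>x. g x \<partial>pback p n N y) = (\<integral>zw. g (fst zw) * snd zw \<partial>Ylaw p psi N y (N - n))"
proof -
  interpret backward_weighted_chain p psi N
    by (intro backward_weighted_chain.intro transition_densities.intro backward_weighted_chain_axioms.intro)
      (fact p_meas p_nonneg psi_meas psi_pos q_prob)+
  let ?Y = "Ylaw p psi N y (N - n)"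
  have "pback p n N y = distr (density ?Y (\<lambda>zw. ennreal (snd zw))) borel fst"
    using distr_weighted_Ylaw[of "N - n" y] nN by simp
  then have "(\<integral>x. g x \<partial>pback p n N y) = (\<integral>zw. g (fst zw) \<partial>density ?Y (\<lambda>zw. ennreal (snd zw)))"
    using g_meas by (simp add: integral_distr)
  also have "\<dots> = (\<integral>zw. snd zw *\<^sub>R g (fst zw) \<partial>?Y)"
    using g_meas AE_Ylaw_weight_nonneg[of "N - n" y] by (intro integral_density) simp_all
  finally show ?thesis
    by (simp add: mult.commute)
qed

end
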